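(* Let $C\subseteq\mathbb{S}$ be a nonempty closed s-convex set. Then $\operatorname{sext}C\neq\emptyset$, $\operatorname{sext}C$ is hull-addible, and $C=\operatorname{sco}(\operatorname{sext}C)$.
   Context: Standing setting: $n\ge 2$; $o$ denotes the zero vector of $\mathbb{R}^n$. $\Phi:\mathbb{R}^n\to\mathbb{R}_+:=[0,\infty)$ is a continuous function with $\Phi(tx)=t\Phi(x)$ for all $x\in\mathbb{R}^n$, $t\ge 0$, and $\Phi(x)=0$ iff $x=o$. Set $\mathbb{S}:=\{x\in\mathbb{R}^n\mid \Phi(x)=1\}$ (with the topology induced from $\mathbb{R}^n$) and $\rho:\mathbb{R}^n\to\{o\}\cup\mathbb{S}$, $\rho(x):=x/\Phi(x)$ for $x\neq o$, $\rho(o):=o$. For $x,y\in\mathbb{S}$, $\lambda\in[0,1]$, $\lambda x+_s(1-\lambda)y:=\rho(\lambda x+(1-\lambda)y)$. A nonempty set $S\subseteq\mathbb{S}$ is called s-convex if $\lambda x+_s(1-\lambda)y\in S$ for all $x,y\in S$ and $\lambda\in[0,1]$. For s-convex $C$, a point $x\in C$ is an s-extreme point of $C$ if whenever $x_1,x_2\in C$, $\lambda\in(0,1)$ and $x=\lambda x_1+_s(1-\lambda)x_2$, then $x_1=x_2$; $\operatorname{sext}C$ denotes the set of s-extreme points of $C$. A nonempty set $S\subseteq\mathbb{S}$ is hull-addible if $o\notin\operatorname{conv}S$; for such $S$, $\operatorname{sco}S:=\rho(\operatorname{conv}S)$. *)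

theory Defs
  imports "HOL-Analysis.Analysis"
begin

definition sph :: "('a::euclidean_space \<Rightarrow> real) \<Rightarrow> 'a set" where
  "sph \<Phi> = {x. \<Phi> x = 1}"

definition rho :: "('a::euclidean_space \<Rightarrow> real) \<Rightarrow> 'a \<Rightarrow> 'a" where
  "rho \<Phi> x = (if x = 0 then 0 else x /\<^sub>R \<Phi> x)"

definition scomb :: "('a::euclidean_space \<Rightarrow> real) \<Rightarrow> real \<Rightarrow> 'a \<Rightarrow> 'a \<Rightarrow> 'a" where
  "scomb \<Phi> l x y = rho \<Phi> (l *\<^sub>R x + (1 - l) *\<^sub>R y)"

definition s_convex :: "('a::euclidean_space \<Rightarrow> real) \<Rightarrow> 'a set \<Rightarrow> bool" where
  "s_convex \<Phi> S \<longleftrightarrow> S \<noteq> {} \<and> S \<subseteq> sph \<Phi> \<and>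
     (\<forall>x\<in>S. \<forall>y\<in>S. \<forall>l\<in>{0..1}. scomb \<Phi> l x y \<in> S)"

definition sext :: "('a::euclidean_space \<Rightarrow> real) \<Rightarrow> 'a set \<Rightarrow> 'a set" where
  "sext \<Phi> C = {x \<in> C. \<forall>x1\<in>C. \<forall>x2\<in>C. \<forall>l\<in>{0<..<1}.
      x = scomb \<Phi> l x1 x2 \<longrightarrow> x1 = x2}"

definition hull_addible :: "('a::euclidean_space \<Rightarrow> real) \<Rightarrow> 'a set \<Rightarrow> bool" where
  "hull_addible \<Phi> S \<longleftrightarrow> S \<noteq> {} \<and> S \<subseteq> sph \<Phi> \<and> 0 \<notin> convex hull S"

definition sco :: "('a::euclidean_space \<Rightarrow> real) \<Rightarrow> 'a set \<Rightarrow> 'a set" where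
  "sco \<Phi> S = rho \<Phi> ` (convex hull S)"

end

theory Submission
  imports Defs
begin

text \<open>s-convexity of \<open>C\<close> makes the open cone over \<open>C\<close> convex; as \<open>C\<close> lies on
  \<open>sph \<Phi>\<close>, this cone avoids the origin, so \<open>0 \<notin> convex hull C\<close> and \<open>sco \<Phi> C \<subseteq> C\<close>. Since \<open>C\<close> is
  compact, a hyperplane \<open>a \<bullet> x = 1\<close> separates it from the origin, and the section \<open>B\<close> of the cone
  by that hyperplane is a compact convex set homeomorphic to \<open>C\<close> under radial projection. By
  Krein--Milman, \<open>B\<close> is the convex hull of its extreme points, and these are exactly the radial
  images of the s-extreme points of \<open>C\<close>. Projecting back to \<open>sph \<Phi>\<close> gives \<open>C = sco \<Phi> (sext \<Phi> C)\<close>.\<close>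

locale gauge_function =
  fixes \<Phi> :: "'a::euclidean_space \<Rightarrow> real"
  assumes continuous: "continuous_on UNIV \<Phi>"
    and nonneg: "\<Phi> x \<ge> 0"
    and homogeneous: "t \<ge> 0 \<Longrightarrow> \<Phi> (t *\<^sub>R x) = t * \<Phi> x"
    and zero_iff: "\<Phi> x = 0 \<longleftrightarrow> x = 0"
begin

lemma zero [simp]: "\<Phi> 0 = 0"
  using zero_iff by simp

lemma pos: "x \<noteq> 0 \<Longrightarrow> \<Phi> x > 0"
  using nonneg[of x] zero_iff[of x] by linarith

lemma zero_notin_sph: "0 \<notin> sph \<Phi>"
  by (simp add: sph_def)

lemma rho_sph: "x \<in> sph \<Phi> \<Longrightarrow> rho \<Phi> x = x"
  by (auto simp: rho_def sph_def)

lemma rho_scaleR: "t > 0 \<Longrightarrow> rho \<Phi> (t *\<^sub>R x) = rho \<Phi> x"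
  using homogeneous[of t x] zero_iff[of x] by (auto simp: rho_def)

lemma scaleR_rho: "\<Phi> x *\<^sub>R rho \<Phi> x = x"
  using zero_iff[of x] by (auto simp: rho_def)

lemma sph_scaleR_eq_1:
  assumes "x \<in> sph \<Phi>" "t \<ge> 0" "t *\<^sub>R x \<in> sph \<Phi>"
  shows "t = 1"
  using assms homogeneous[of t x] by (simp add: sph_def)

lemma norm_le_gauge: "\<exists>m>0. \<forall>x. m * norm x \<le> \<Phi> x"
proof -
  have "\<exists>x\<in>sphere (0::'a) 1. \<forall>y\<in>sphere 0 1. \<Phi> x \<le> \<Phi> y"
    by (rule continuous_attains_inf) (auto intro: continuous_on_subset[OF continuous])
  then obtain x0 where x0: "x0 \<in> sphere (0::'a) 1" and min: "\<And>y. y \<in> sphere 0 1 \<Longrightarrow> \<Phi> x0 \<le> \<Phi> y"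
    by blast
  have "\<Phi> x0 * norm x \<le> \<Phi> x" for x
  proof (cases "x = 0")
    case False
    have "\<Phi> x = norm x * \<Phi> (x /\<^sub>R norm x)"
      using homogeneous[of "norm x" "x /\<^sub>R norm x"] False by simp
    moreover have "\<Phi> x0 \<le> \<Phi> (x /\<^sub>R norm x)"
      using min[of "x /\<^sub>R norm x"] False by simp
    ultimately show ?thesis
      by (simp add: mult.commute mult_left_mono)
  qed simp
  moreover have "\<Phi> x0 > 0"
    using x0 by (intro pos) auto
  ultimately show ?thesis by blast
qed

lemma compact_sph: "compact (sph \<Phi>)"
proof -
  obtain m where m: "m > 0" "\<And>x. m * norm x \<le> \<Phi> x"
    using norm_le_gauge by blast
  have "norm x \<le> 1 / m" if "\<Phi> x = 1" for x
    using m(2)[of x] m(1) that by (simp add: field_simps mult.commute)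
  then have "sph \<Phi> \<subseteq> cball 0 (1 / m)"
    by (auto simp: sph_def)
  then have "bounded (sph \<Phi>)"
    using bounded_cball bounded_subset by blast
  moreover have "closed (sph \<Phi>)"
    unfolding sph_def using closed_Collect_eq[OF continuous continuous_on_const] .
  ultimately show ?thesis
    by (simp add: compact_eq_bounded_closed)
qed

end

definition ray_cone :: "'a::real_vector set \<Rightarrow> 'a set" where
  "ray_cone S = {t *\<^sub>R x |t x. 0 < t \<and> x \<in> S}"

lemma subset_ray_cone: "S \<subseteq> ray_cone S"
  unfolding ray_cone_def by (auto intro!: exI[of _ 1])

lemma zero_notin_ray_cone: "0 \<notin> S \<Longrightarrow> 0 \<notin> ray_cone S"
  unfolding ray_cone_def by auto

lemma convex_ray_coneI:
  assumes "\<And>x y \<alpha> \<beta>. x \<in> S \<Longrightarrow> y \<in> S \<Longrightarrow> 0 < \<alpha> \<Longrightarrow> 0 < \<beta> \<Longrightarrow> \<alpha> *\<^sub>R x + \<beta> *\<^sub>R y \<in> ray_cone S"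
  shows "convex (ray_cone S)"
proof (rule convexI)
  fix x y and u v :: real
  assume x: "x \<in> ray_cone S" and y: "y \<in> ray_cone S" and uv: "0 \<le> u" "0 \<le> v" "u + v = 1"
  obtain s x' where x': "x = s *\<^sub>R x'" "0 < s" "x' \<in> S"
    using x by (auto simp: ray_cone_def)
  obtain t y' where y': "y = t *\<^sub>R y'" "0 < t" "y' \<in> S"
    using y by (auto simp: ray_cone_def)
  consider "u = 0" | "v = 0" | "0 < u" "0 < v"
    using uv by fastforce
  then show "u *\<^sub>R x + v *\<^sub>R y \<in> ray_cone S"
  proof cases
    case 3
    then show ?thesis
      using assms[OF x'(3) y'(3), of "u * s" "v * t"] x' y' by simp
  qed (use uv x y in auto)
qed

lemma convex_ray_cone:
  assumes "convex S"
  shows "convex (ray_cone S)"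
proof (rule convex_ray_coneI)
  fix x y and \<alpha> \<beta> :: real
  assume "x \<in> S" "y \<in> S" "0 < \<alpha>" "0 < \<beta>"
  then have "(\<alpha> / (\<alpha> + \<beta>)) *\<^sub>R x + (\<beta> / (\<alpha> + \<beta>)) *\<^sub>R y \<in> S"
    using convexD[OF assms] by (simp add: add_divide_distrib[symmetric])
  moreover have "\<alpha> *\<^sub>R x + \<beta> *\<^sub>R y = (\<alpha> + \<beta>) *\<^sub>R ((\<alpha> / (\<alpha> + \<beta>)) *\<^sub>R x + (\<beta> / (\<alpha> + \<beta>)) *\<^sub>R y)"
    using \<open>0 < \<alpha>\<close> \<open>0 < \<beta>\<close> by (simp add: scaleR_add_right)
  ultimately show "\<alpha> *\<^sub>R x + \<beta> *\<^sub>R y \<in> ray_cone S"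
    using \<open>0 < \<alpha>\<close> \<open>0 < \<beta>\<close> unfolding ray_cone_def by force
qed

context gauge_function
begin

lemma rho_ray_cone:
  assumes "S \<subseteq> sph \<Phi>" "y \<in> ray_cone S"
  shows "rho \<Phi> y \<in> S"
  using assms rho_scaleR rho_sph by (auto simp: ray_cone_def)

lemma s_convex_add_in_ray_cone:
  assumes "s_convex \<Phi> C" "x \<in> C" "y \<in> C" "0 < \<alpha>" "0 < \<beta>"
  shows "\<alpha> *\<^sub>R x + \<beta> *\<^sub>R y \<in> ray_cone C"
proof -
  define w where "w = (\<alpha> / (\<alpha> + \<beta>)) *\<^sub>R x + (1 - \<alpha> / (\<alpha> + \<beta>)) *\<^sub>R y"
  have w: "rho \<Phi> w \<in> C"
    using assms by (auto simp: s_convex_def scomb_def w_def)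
  then have "w \<noteq> 0"
    using assms(1) zero_notin_sph by (auto simp: s_convex_def rho_def)
  have "(\<alpha> + \<beta>) * (\<alpha> / (\<alpha> + \<beta>)) = \<alpha>" "(\<alpha> + \<beta>) * (1 - \<alpha> / (\<alpha> + \<beta>)) = \<beta>"
    using assms(4,5) by (simp_all add: field_simps)
  then have "\<alpha> *\<^sub>R x + \<beta> *\<^sub>R y = (\<alpha> + \<beta>) *\<^sub>R w"
    unfolding w_def scaleR_add_right scaleR_scaleR by simp
  also have "\<dots> = ((\<alpha> + \<beta>) * \<Phi> w) *\<^sub>R rho \<Phi> w"
    by (metis scaleR_rho scaleR_scaleR)
  finally show ?thesis
    using w pos[OF \<open>w \<noteq> 0\<close>] assms(4,5) unfolding ray_cone_def by force
qed

lemma convex_ray_cone_s_convex: "s_convex \<Phi> C \<Longrightarrow> convex (ray_cone C)"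
  by (rule convex_ray_coneI) (rule s_convex_add_in_ray_cone)

lemma convex_hull_s_convex_subset_ray_cone: "s_convex \<Phi> C \<Longrightarrow> convex hull C \<subseteq> ray_cone C"
  by (simp add: convex_ray_cone_s_convex hull_minimal subset_ray_cone)

lemma zero_notin_convex_hull_s_convex:
  assumes "s_convex \<Phi> C"
  shows "0 \<notin> convex hull C"
proof -
  have "0 \<notin> C"
    using assms zero_notin_sph by (auto simp: s_convex_def)
  then show ?thesis
    using convex_hull_s_convex_subset_ray_cone[OF assms] zero_notin_ray_cone by blast
qed

lemma sco_s_convex_subset:
  assumes "s_convex \<Phi> C"
  shows "sco \<Phi> C \<subseteq> C"
proof -
  have "C \<subseteq> sph \<Phi>"
    using assms by (simp add: s_convex_def)
  then show ?thesis
    using convex_hull_s_convex_subset_ray_cone[OF assms] rho_ray_cone unfolding sco_def by blast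
qed

end


definition radial_proj :: "'a::real_inner \<Rightarrow> 'a \<Rightarrow> 'a" where
  "radial_proj a x = x /\<^sub>R (a \<bullet> x)"

lemma radial_proj_scaleR: "t > 0 \<Longrightarrow> radial_proj a (t *\<^sub>R x) = radial_proj a x"
  by (simp add: radial_proj_def)

lemma ray_cone_Int_hyperplane:
  assumes "\<forall>x\<in>S. 0 < a \<bullet> x"
  shows "ray_cone S \<inter> {y. a \<bullet> y = 1} = radial_proj a ` S"
proof
  show "ray_cone S \<inter> {y. a \<bullet> y = 1} \<subseteq> radial_proj a ` S"
  proof
    fix y assume "y \<in> ray_cone S \<inter> {y. a \<bullet> y = 1}"
    then obtain t x where y: "y = t *\<^sub>R x" "0 < t" "x \<in> S" "t * (a \<bullet> x) = 1"
      by (auto simp: ray_cone_def)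
    then have "t = inverse (a \<bullet> x)"
      by (metis inverse_unique mult.commute)
    then have "y = radial_proj a x"
      using y(1) by (simp add: radial_proj_def)
    then show "y \<in> radial_proj a ` S"
      using y(3) by blast
  qed
  show "radial_proj a ` S \<subseteq> ray_cone S \<inter> {y. a \<bullet> y = 1}"
    using assms by (force simp: ray_cone_def radial_proj_def)
qed

lemma radial_proj_eq_imp_scaleR:
  assumes "0 < a \<bullet> p" "0 < a \<bullet> q" "radial_proj a p = radial_proj a q"
  shows "p = ((a \<bullet> p) / (a \<bullet> q)) *\<^sub>R q"
proof -
  have "p = (a \<bullet> p) *\<^sub>R radial_proj a p"
    using assms(1) by (simp add: radial_proj_def)
  also have "\<dots> = (a \<bullet> p) *\<^sub>R inverse (a \<bullet> q) *\<^sub>R q"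
    using assms(3) by (simp add: radial_proj_def)
  finally show ?thesis
    by (simp add: divide_inverse)
qed

lemma radial_proj_in_open_segment:
  assumes p: "0 < a \<bullet> p" and q: "0 < a \<bullet> q" and l: "0 < l" "l < 1"
    and ne: "radial_proj a p \<noteq> radial_proj a q"
  shows "radial_proj a (l *\<^sub>R p + (1 - l) *\<^sub>R q) \<in> open_segment (radial_proj a p) (radial_proj a q)"
proof -
  define F where "F = l * (a \<bullet> p) + (1 - l) * (a \<bullet> q)"
  define u where "u = (1 - l) * (a \<bullet> q) / F"
  have F: "0 < F"
    using p q l by (simp add: F_def add_pos_pos)
  have u: "0 < u" "u < 1" "1 - u = l * (a \<bullet> p) / F"
    using p q l F by (auto simp: u_def F_def field_simps)
  have "radial_proj a (l *\<^sub>R p + (1 - l) *\<^sub>R q) = (l / F) *\<^sub>R p + ((1 - l) / F) *\<^sub>R q"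
    by (simp add: radial_proj_def F_def inner_add_right scaleR_add_right divide_inverse mult.commute)
  also have "\<dots> = (1 - u) *\<^sub>R radial_proj a p + u *\<^sub>R radial_proj a q"
    using u(3) p q by (simp add: radial_proj_def u_def mult.assoc)
  finally show ?thesis
    using u(1,2) ne by (auto simp: in_segment)
qed

lemma convex_hull_radial_proj_subset_ray_cone:
  assumes "\<forall>x\<in>S. 0 < a \<bullet> x"
  shows "convex hull (radial_proj a ` S) \<subseteq> ray_cone (convex hull S)"
proof (rule hull_minimal)
  show "radial_proj a ` S \<subseteq> ray_cone (convex hull S)"
    using assms hull_subset[of S convex] by (force simp: ray_cone_def radial_proj_def)
qed (simp add: convex_ray_cone)

context gauge_function
begin

lemma radial_proj_inj_on_sph:
  assumes "p \<in> sph \<Phi>" "q \<in> sph \<Phi>" "0 < a \<bullet> p" "0 < a \<bullet> q"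
    and "radial_proj a p = radial_proj a q"
  shows "p = q"
proof -
  have p: "p = ((a \<bullet> p) / (a \<bullet> q)) *\<^sub>R q"
    using radial_proj_eq_imp_scaleR assms(3-5) .
  moreover have "0 \<le> (a \<bullet> p) / (a \<bullet> q)"
    using assms(3,4) by simp
  ultimately have "(a \<bullet> p) / (a \<bullet> q) = 1"
    using sph_scaleR_eq_1[OF assms(2)] assms(1) by metis
  then show ?thesis
    using p by simp
qed

lemma sext_if_extreme_point_radial_proj:
  assumes C: "s_convex \<Phi> C" and pos_C: "\<forall>x\<in>C. 0 < a \<bullet> x" and c: "c \<in> C"
    and ext: "radial_proj a c extreme_point_of (radial_proj a ` C)"
  shows "c \<in> sext \<Phi> C"
  unfolding sext_def
proof (intro CollectI conjI ballI impI c)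
  fix x y and l :: real
  assume xy: "x \<in> C" "y \<in> C" and l: "l \<in> {0<..<1}" and c_eq: "c = scomb \<Phi> l x y"
  have CS: "C \<subseteq> sph \<Phi>"
    using C by (simp add: s_convex_def)
  define w where "w = l *\<^sub>R x + (1 - l) *\<^sub>R y"
  have "c = rho \<Phi> w"
    using c_eq by (simp add: scomb_def w_def)
  then have "w \<noteq> 0"
    using c CS zero_notin_sph by (auto simp: rho_def)
  have "radial_proj a c = radial_proj a w"
    using radial_proj_scaleR[OF pos[OF \<open>w \<noteq> 0\<close>], of a "rho \<Phi> w"]
    by (simp add: \<open>c = rho \<Phi> w\<close> scaleR_rho)
  show "x = y"
  proof (rule ccontr)
    assume "x \<noteq> y"
    then have "radial_proj a x \<noteq> radial_proj a y"
      using radial_proj_inj_on_sph xy CS pos_C by blast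
    then have "radial_proj a c \<in> open_segment (radial_proj a x) (radial_proj a y)"
      using radial_proj_in_open_segment[of a x y l] pos_C xy l
      unfolding \<open>radial_proj a c = radial_proj a w\<close> w_def by simp
    then show False
      using ext xy unfolding extreme_point_of_def by blast
  qed
qed

lemma radial_proj_eq_convex_hull_sext:
  assumes C: "s_convex \<Phi> C" "compact C" and pos_C: "\<forall>x\<in>C. 0 < a \<bullet> x"
  shows "radial_proj a ` C = convex hull (radial_proj a ` sext \<Phi> C)"
    (is "?B = _")
proof -
  have "convex ?B"
    unfolding ray_cone_Int_hyperplane[OF pos_C, symmetric]
    using convex_ray_cone_s_convex[OF C(1)] by (intro convex_Int) (auto intro: convex_hyperplane)
  moreover have "compact ?B"
    using C(2) pos_C
    by (intro compact_continuous_image) (auto simp: radial_proj_def intro!: continuous_intros)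
  ultimately have "?B = convex hull {y. y extreme_point_of ?B}"
    by (simp add: Krein_Milman_Minkowski)
  also have "\<dots> \<subseteq> convex hull (radial_proj a ` sext \<Phi> C)"
    using sext_if_extreme_point_radial_proj[OF C(1) pos_C]
    by (intro hull_mono) (force simp: extreme_point_of_def)
  finally show ?thesis
    using \<open>convex ?B\<close> hull_minimal[of "radial_proj a ` sext \<Phi> C" ?B convex]
    by (auto simp: sext_def)
qed

lemma exists_hyperplane_separating_s_convex:
  assumes "s_convex \<Phi> C" "compact C"
  obtains a where "\<forall>x\<in>C. 0 < a \<bullet> x"
proof -
  obtain a b where "0 < b" "\<forall>x\<in>convex hull C. b < a \<bullet> x"
    using separating_hyperplane_closed_0[of "convex hull C"] zero_notin_convex_hull_s_convex[OF assms(1)]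
      compact_imp_closed[OF compact_convex_hull[OF assms(2)]] by auto
  then have "\<forall>x\<in>C. 0 < a \<bullet> x"
    using hull_subset[of C convex] by fastforce
  then show ?thesis
    using that by blast
qed

lemma subset_sco_sext:
  assumes C: "s_convex \<Phi> C" "compact C" and pos_C: "\<forall>x\<in>C. 0 < a \<bullet> x"
  shows "C \<subseteq> sco \<Phi> (sext \<Phi> C)"
proof
  fix c assume c: "c \<in> C"
  have "\<forall>x\<in>sext \<Phi> C. 0 < a \<bullet> x"
    using pos_C by (simp add: sext_def)
  then have "radial_proj a c \<in> ray_cone (convex hull sext \<Phi> C)"
    using radial_proj_eq_convex_hull_sext[OF C pos_C] convex_hull_radial_proj_subset_ray_cone c
    by blast
  then obtain t y where ty: "radial_proj a c = t *\<^sub>R y" "0 < t" "y \<in> convex hull sext \<Phi> C"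
    by (auto simp: ray_cone_def)
  have "c = rho \<Phi> (radial_proj a c)"
    using rho_scaleR[of "inverse (a \<bullet> c)" c] rho_sph[of c] pos_C c C(1)
    by (auto simp: radial_proj_def s_convex_def)
  also have "\<dots> = rho \<Phi> y"
    using ty rho_scaleR by simp
  finally show "c \<in> sco \<Phi> (sext \<Phi> C)"
    using ty(3) by (simp add: sco_def)
qed

theorem s_extreme_points_of_compact_s_convex:
  assumes C: "s_convex \<Phi> C" "compact C"
  shows "sext \<Phi> C \<noteq> {} \<and> hull_addible \<Phi> (sext \<Phi> C) \<and> C = sco \<Phi> (sext \<Phi> C)"
proof -
  obtain a where pos_C: "\<forall>x\<in>C. 0 < a \<bullet> x"
    using exists_hyperplane_separating_s_convex[OF C] .
  have sext_C: "sext \<Phi> C \<subseteq> C"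
    by (auto simp: sext_def)
  have "sext \<Phi> C \<noteq> {}"
    using radial_proj_eq_convex_hull_sext[OF C pos_C] C(1) by (auto simp: s_convex_def)
  moreover have "hull_addible \<Phi> (sext \<Phi> C)"
    using calculation sext_C C(1) zero_notin_convex_hull_s_convex[OF C(1)] hull_mono[OF sext_C]
    by (auto simp: hull_addible_def s_convex_def)
  moreover have "sco \<Phi> (sext \<Phi> C) \<subseteq> C"
    using sco_s_convex_subset[OF C(1)] hull_mono[OF sext_C] by (auto simp: sco_def)
  ultimately show ?thesis
    using subset_sco_sext[OF C pos_C] by blast
qed

end

theorem mainTheorem17:
  fixes \<Phi> :: "'a::euclidean_space \<Rightarrow> real" and C :: "'a set"
  assumes "DIM('a) \<ge> 2"
    and "continuous_on UNIV \<Phi>"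
    and "\<And>x. \<Phi> x \<ge> 0"
    and "\<And>x t. t \<ge> 0 \<Longrightarrow> \<Phi> (t *\<^sub>R x) = t * \<Phi> x"
    and "\<And>x. \<Phi> x = 0 \<longleftrightarrow> x = 0"
    and "C \<noteq> {}"
    and "C \<subseteq> sph \<Phi>"
    and "closedin (top_of_set (sph \<Phi>)) C"
    and "s_convex \<Phi> C"
  shows "sext \<Phi> C \<noteq> {} \<and> hull_addible \<Phi> (sext \<Phi> C) \<and> C = sco \<Phi> (sext \<Phi> C)"
proof -
  interpret gauge_function \<Phi>
    using assms(2-5) by unfold_locales auto
  have "compact C"
    using assms(8) compact_sph closedin_compact by blast
  then show ?thesis
    using s_extreme_points_of_compact_s_convex assms(9) by blast
qed

end
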